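(* Let $(\mathcal{I},G,S)$ be an optimization problem class and let $(\mathcal{Q},H)$ be an oracle for $\mathcal{I}$. Suppose $\epsilon\ge 0$ and $\mathcal{A}$ is an $\epsilon$-approximation algorithm for $(\mathcal{I},G,S)$ using $(\mathcal{Q},H)$. For each $I\in\mathcal{I}$ let $Q(I)\subseteq\mathcal{Q}$ be the set of queries posed by $\mathcal{A}$ when processing instance $I$. Then $$\bigcap_{I'\in V(I,Q(I))} S(I',\epsilon)\neq\emptyset\qquad\text{for all } I\in\mathcal{I}.$$
   Context: An optimization problem class is a triple $(\mathcal{I},G,S)$: a set $\mathcal{I}$ of instances, a set $G$ of possible solutions, and a solution operator $S:\mathcal{I}\times\mathbb{R}_+\to 2^G\cup\{INFEAS\}\cup\{UNBND\}$ such that $S(I,0)\neq\emptyset$ for all $I$; $S(I,\epsilon_1)\subseteq S(I,\epsilon_2)$ whenever $0\le\epsilon_1<\epsilon_2$; if $INFEAS\in S(I,\epsilon)$ (resp. $UNBND\in S(I,\epsilon)$) then $S(I,\epsilon)=\{INFEAS\}$ (resp. $\{UNBND\}$); and if $UNBND\in S(I,0)$ then $S(I,\epsilon)=\{UNBND\}$ for all $\epsilon\ge0$. $S(I,\epsilon)$ is interpreted as the set of $\epsilon$-approximate solutions of $I$. An oracle for $\mathcal{I}$ is a pair $(\mathcal{Q},H)$ where each query $q\in\mathcal{Q}$ is a map $q:\mathcal{I}\to H$; $q(I)$ is the answer to $q$ on $I$. An $\epsilon$-approximation algorithm for $(\mathcal{I},G,S)$ using $(\mathcal{Q},H)$ is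 an oracle Turing machine (a deterministic Turing machine that may adaptively pose queries $q\in\mathcal{Q}$ and use the answers) that starts with the empty string as input and, for every $I\in\mathcal{I}$, halts with an element of $S(I,\epsilon)$ when every query $q$ it poses is answered with $q(I)$. For a subset $Q\subseteq\mathcal{Q}$ and $I\in\mathcal{I}$, $V(I,Q)=\{I'\in\mathcal{I}: q(I')=q(I)\ \forall q\in Q\}$. *)

theory Defs
  imports Main "HOL.Real"
begin

datatype 'g result = Sol 'g | INFEAS | UNBND

definition opt_problem_class ::
  "'i set \<Rightarrow> 'g set \<Rightarrow> ('i \<Rightarrow> real \<Rightarrow> 'g result set) \<Rightarrow> bool" where
  "opt_problem_class II G S \<longleftrightarrow>
     (\<forall>I\<in>II. \<forall>e\<ge>0. S I e \<subseteq> Sol ` G \<or> S I e = {INFEAS} \<or> S I e = {UNBND}) \<and>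
     (\<forall>I\<in>II. S I 0 \<noteq> {}) \<and>
     (\<forall>I\<in>II. \<forall>e1 e2. 0 \<le> e1 \<and> e1 < e2 \<longrightarrow> S I e1 \<subseteq> S I e2) \<and>
     (\<forall>I\<in>II. \<forall>e\<ge>0. INFEAS \<in> S I e \<longrightarrow> S I e = {INFEAS}) \<and>
     (\<forall>I\<in>II. \<forall>e\<ge>0. UNBND \<in> S I e \<longrightarrow> S I e = {UNBND}) \<and>
     (\<forall>I\<in>II. UNBND \<in> S I 0 \<longrightarrow> (\<forall>e\<ge>0. S I e = {UNBND}))"

text \<open>A deterministic adaptive oracle algorithm started on the empty input is modelled by
  its next action as a function of the sequence of oracle answers received so far.\<close>
datatype ('q, 'o) action = Ask 'q | Output 'o

type_synonym ('i, 'h, 'g) oracle_alg = "'h list \<Rightarrow> ('i \<Rightarrow> 'h, 'g result) action"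

fun hist :: "('i, 'h, 'g) oracle_alg \<Rightarrow> 'i \<Rightarrow> nat \<Rightarrow> 'h list" where
  "hist A I 0 = []"
| "hist A I (Suc n) =
     (case A (hist A I n) of Ask q \<Rightarrow> hist A I n @ [q I] | Output _ \<Rightarrow> hist A I n)"

definition queries_posed :: "('i, 'h, 'g) oracle_alg \<Rightarrow> 'i \<Rightarrow> ('i \<Rightarrow> 'h) set" where
  "queries_posed A I = {q. \<exists>n. (\<forall>m<n. \<exists>q'. A (hist A I m) = Ask q') \<and> A (hist A I n) = Ask q}"

definition approx_alg ::
  "'i set \<Rightarrow> ('i \<Rightarrow> real \<Rightarrow> 'g result set) \<Rightarrow> ('i \<Rightarrow> 'h) set \<Rightarrow> real
     \<Rightarrow> ('i, 'h, 'g) oracle_alg \<Rightarrow> bool" where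
  "approx_alg II S QQ e A \<longleftrightarrow>
     (\<forall>I\<in>II. queries_posed A I \<subseteq> QQ \<and>
        (\<exists>n x. A (hist A I n) = Output x \<and> x \<in> S I e))"

definition Vset :: "'i set \<Rightarrow> 'i \<Rightarrow> ('i \<Rightarrow> 'h) set \<Rightarrow> 'i set" where
  "Vset II I Q = {I'\<in>II. \<forall>q\<in>Q. q I' = q I}"

end

theory Submission
  imports Defs
begin

text \<open>A run of the algorithm is determined by the answers it receives, so the run on I'
  coincides with the run on I as long as every query asked so far has the same answer on I'
  as on I. For I' in V(I, Q(I)) this holds until the run on I halts; hence the run on I' halts
  with the same output x, and correctness of the algorithm on I' puts x into S I' e.\<close>

definition halts_with :: "('i, 'h, 'g) oracle_alg \<Rightarrow> 'i \<Rightarrow> 'g result \<Rightarrow> bool" where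
  "halts_with A I x \<longleftrightarrow> (\<exists>n. A (hist A I n) = Output x)"

lemma hist_stable_after_Output:
  assumes "A (hist A I n) = Output x" and "n \<le> m"
  shows "hist A I m = hist A I n"
  using assms(2)
proof (induction m rule: dec_induct)
  case (step m)
  with assms(1) show ?case by simp
qed simp

lemma halts_with_unique:
  assumes "halts_with A I x" and "halts_with A I y"
  shows "x = y"
proof -
  obtain n m where n: "A (hist A I n) = Output x" and m: "A (hist A I m) = Output y"
    using assms unfolding halts_with_def by blast
  show ?thesis
  proof (cases "n \<le> m")
    case True
    with n have "hist A I m = hist A I n" by (rule hist_stable_after_Output)
    with n m show ?thesis by simp
  next
    case False
    with m have "hist A I n = hist A I m" by (intro hist_stable_after_Output) auto
    with n m show ?thesis by simp
  qed
qed

lemma halts_with_first_Output: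
  assumes "halts_with A I x"
  obtains n where "A (hist A I n) = Output x" and "\<forall>m<n. \<exists>q. A (hist A I m) = Ask q"
proof -
  let ?halted = "\<lambda>n. \<exists>y. A (hist A I n) = Output y"
  define n where "n = (LEAST n. ?halted n)"
  have "\<exists>n. ?halted n"
    using assms unfolding halts_with_def by blast
  then have "?halted n"
    unfolding n_def by (rule LeastI_ex)
  then obtain y where y: "A (hist A I n) = Output y" by blast
  then have "halts_with A I y" unfolding halts_with_def by blast
  then have "y = x" using assms by (rule halts_with_unique)
  moreover have "\<exists>q. A (hist A I m) = Ask q" if "m < n" for m
    using not_less_Least[OF that[unfolded n_def]] by (cases "A (hist A I m)") auto
  ultimately show thesis using that y by blast
qed

lemma hist_eq_if_answers_agree:
  assumes "\<And>m. m < n \<Longrightarrow> \<exists>q. A (hist A I m) = Ask q \<and> q I' = q I" and "k \<le> n"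
  shows "hist A I' k = hist A I k"
  using assms(2)
proof (induction k)
  case (Suc k)
  then have "k < n" by simp
  then obtain q where "A (hist A I k) = Ask q" and "q I' = q I" using assms(1) by blast
  with Suc show ?case by simp
qed simp

lemma halts_with_if_queries_posed_agree:
  assumes "halts_with A I x" and "\<forall>q\<in>queries_posed A I. q I' = q I"
  shows "halts_with A I' x"
proof -
  obtain n where out: "A (hist A I n) = Output x"
    and asks: "\<forall>m<n. \<exists>q. A (hist A I m) = Ask q"
    using assms(1) by (rule halts_with_first_Output)
  have "\<exists>q. A (hist A I m) = Ask q \<and> q I' = q I" if "m < n" for m
  proof -
    obtain q where q: "A (hist A I m) = Ask q" using asks \<open>m < n\<close> by blast
    moreover have "\<forall>m'<m. \<exists>q'. A (hist A I m') = Ask q'"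
      using asks \<open>m < n\<close> by simp
    ultimately have "q \<in> queries_posed A I"
      unfolding queries_posed_def by blast
    with q assms(2) show ?thesis by blast
  qed
  then have "hist A I' n = hist A I n"
    by (rule hist_eq_if_answers_agree[OF _ order_refl])
  with out have "A (hist A I' n) = Output x" by simp
  then show ?thesis unfolding halts_with_def by blast
qed

theorem mainTheorem1:
  fixes II :: "'i set" and G :: "'g set" and S :: "'i \<Rightarrow> real \<Rightarrow> 'g result set"
    and QQ :: "('i \<Rightarrow> 'h) set" and e :: real and A :: "('i, 'h, 'g) oracle_alg"
  assumes "opt_problem_class II G S"
    and "e \<ge> 0"
    and "approx_alg II S QQ e A"
  shows "\<forall>I\<in>II. (\<Inter>I'\<in>Vset II I (queries_posed A I). S I' e) \<noteq> {}"
proof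
  have correct: "\<exists>x. halts_with A I x \<and> x \<in> S I e" if "I \<in> II" for I
    using assms(3) that unfolding approx_alg_def halts_with_def by blast
  fix I assume "I \<in> II"
  then obtain x where x: "halts_with A I x" using correct by blast
  have "x \<in> S I' e" if I': "I' \<in> Vset II I (queries_posed A I)" for I'
  proof -
    from I' obtain y where y: "halts_with A I' y" "y \<in> S I' e"
      using correct unfolding Vset_def by blast
    from I' have "halts_with A I' x"
      using halts_with_if_queries_posed_agree[OF x] unfolding Vset_def by blast
    with y show ?thesis using halts_with_unique[of A I' x y] by simp
  qed
  then show "(\<Inter>I'\<in>Vset II I (queries_posed A I). S I' e) \<noteq> {}" by blast
qed

end
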